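(* For every natural number $n\ge 1$, $p_{min}(n+1)=p_{min}(n)\pm 1$. Moreover, for every integer $k\ge 1$, $p_{min}(n)-1\le p_{min}(n+k)\le p_{min}(n)+k$, and if $p_{min}(n+1)=p_{min}(n)+1$, then $p_{min}(n)\le p_{min}(n+k)$.
   Context: A polyiamond is a planar shape formed by gluing together finitely many congruent (closed) equilateral triangles (tiles) of the regular triangular lattice along their edges: any two tiles that intersect meet in an entire edge, and the union has connected interior. The perimeter $p(A)$ of a polyiamond $A$ is the number of lattice edges lying on the topological boundary of $A$. For $n\ge1$, $p_{min}(n)$ is the minimum of $p(A)$ over all polyiamonds $A$ with exactly $n$ tiles. *)

theory Defs
  imports Main
begin

text \<open>The regular triangular lattice, in lattice coordinates: lattice points are
  integer pairs (a,b) standing for a*u + b*v with u, v unit vectors at angle 60 degrees.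
  A tile is a triple (a,b,up): the up-pointing triangle (a,b,True) has vertices
  (a,b), (a+1,b), (a,b+1); the down-pointing triangle (a,b,False) has vertices
  (a+1,b), (a,b+1), (a+1,b+1).  Every lattice triangle arises exactly once.\<close>

type_synonym tile = "int \<times> int \<times> bool"

definition tri_verts :: "tile \<Rightarrow> (int \<times> int) set" where
  "tri_verts t = (case t of (a, b, up) \<Rightarrow>
     (if up then {(a, b), (a + 1, b), (a, b + 1)}
      else {(a + 1, b), (a, b + 1), (a + 1, b + 1)}))"

definition tri_edges :: "tile \<Rightarrow> (int \<times> int) set set" where
  "tri_edges t = {{p, q} | p q. p \<in> tri_verts t \<and> q \<in> tri_verts t \<and> p \<noteq> q}"

definition tiles_adjacent :: "tile \<Rightarrow> tile \<Rightarrow> bool" where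
  "tiles_adjacent s t \<longleftrightarrow> s \<noteq> t \<and> tri_edges s \<inter> tri_edges t \<noteq> {}"

text \<open>A polyiamond: a finite nonempty set of lattice tiles whose union has connected
  interior, i.e. whose edge-adjacency graph is connected.\<close>
definition polyiamond :: "tile set \<Rightarrow> bool" where
  "polyiamond A \<longleftrightarrow> finite A \<and> A \<noteq> {} \<and>
     (\<forall>s\<in>A. \<forall>t\<in>A. (s, t) \<in> {(x, y). x \<in> A \<and> y \<in> A \<and> tiles_adjacent x y}\<^sup>*)"

definition perimeter :: "tile set \<Rightarrow> nat" where
  "perimeter A = card {e. card {t \<in> A. e \<in> tri_edges t} = 1}"

definition p_min :: "nat \<Rightarrow> nat" where
  "p_min n = (LEAST p. \<exists>A. polyiamond A \<and> card A = n \<and> perimeter A = p)"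

end

(* Every strip of tiles between two consecutive parallel lattice lines that meets a
   polyiamond A contains at least two boundary sides of A crossing it, and exactly two if A meets
   it in an interval.  Summing over the three directions, p(A) is at least the number of strips
   met by A.  Since A is connected, the strips it meets form three intervals, of lengths T - a,
   T - b, T - c say, and A lies in the hexagon they cut out, of area T^2 - a^2 - b^2 - c^2;
   as (3T - a - b - c)^2 >= 6 (T^2 - a^2 - b^2 - c^2), this gives 6 |A| <= p(A)^2.
   Conversely, filling a hexagon with nearly equal corners row by row produces, whenever n + S
   is even and 6 n <= S^2, a polyiamond with n tiles meeting every strip in an interval, hence
   of perimeter at most S.  As p(A) + |A| is always even, p_min n is the least S with n + S
   even and 6 n <= S^2, and the three claims are arithmetic consequences of this description. *)

theory Submission
  imports Defs
begin

section \<open>Sides and neighbours\<close>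

text \<open>Side d of a tile lies on a lattice line b = const (d = 0), a = const (d = 1) or
  a + b = const (d = 2); nbr d t is the tile on the other side of it.\<close>

fun nbr :: "nat \<Rightarrow> tile \<Rightarrow> tile" where
  "nbr d (a, b, True) =
     (if d = 0 then (a, b - 1, False) else if d = 1 then (a - 1, b, False) else (a, b, False))"
| "nbr d (a, b, False) =
     (if d = 0 then (a, b + 1, True) else if d = 1 then (a + 1, b, True) else (a, b, True))"

fun side :: "nat \<Rightarrow> tile \<Rightarrow> (int \<times> int) set" where
  "side d (a, b, True) =
     (if d = 0 then {(a, b), (a + 1, b)} else if d = 1 then {(a, b), (a, b + 1)}
      else {(a + 1, b), (a, b + 1)})"
| "side d (a, b, False) =
     (if d = 0 then {(a, b + 1), (a + 1, b + 1)} else if d = 1 then {(a + 1, b), (a + 1, b + 1)}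
      else {(a + 1, b), (a, b + 1)})"

lemma less_3_cases: "(d::nat) < 3 \<longleftrightarrow> d = 0 \<or> d = 1 \<or> d = 2"
  by auto

lemma tile_cases [case_names up down]:
  obtains a b where "t = (a, b, True)" | a b where "t = (a, b, False)"
  by (metis (full_types) prod_cases3)

lemma doubletons_of_three:
  "p1 \<noteq> p2 \<Longrightarrow> p1 \<noteq> p3 \<Longrightarrow> p2 \<noteq> p3 \<Longrightarrow>
    {{p, q} |p q. p \<in> {p1, p2, p3} \<and> q \<in> {p1, p2, p3} \<and> p \<noteq> q} = {{p1, p2}, {p1, p3}, {p2, p3}}"
  by (auto simp: insert_commute)

lemma tri_edges_eq_sides: "tri_edges t = {side 0 t, side 1 t, side 2 t}"
proof (cases t rule: tile_cases)
  case (up a b)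
  then have "tri_verts t = {(a, b), (a + 1, b), (a, b + 1)}" by (simp add: tri_verts_def)
  then show ?thesis
    unfolding tri_edges_def by (simp only:) (subst doubletons_of_three, auto simp: up)
next
  case (down a b)
  then have "tri_verts t = {(a + 1, b), (a, b + 1), (a + 1, b + 1)}" by (simp add: tri_verts_def)
  then show ?thesis
    unfolding tri_edges_def
    by (simp only:) (subst doubletons_of_three, auto simp: down insert_commute)
qed

lemma mem_tri_edges_iff: "e \<in> tri_edges t \<longleftrightarrow> (\<exists>d<3. e = side d t)"
  unfolding tri_edges_eq_sides less_3_cases by auto

lemma nbr_nbr [simp]: "d < 3 \<Longrightarrow> nbr d (nbr d t) = t"
  by (cases t rule: tile_cases) (auto simp: less_3_cases)

lemma nbr_neq_self [simp]: "nbr d t \<noteq> t" "t \<noteq> nbr d t"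
  by (cases t rule: tile_cases; simp)+

lemma side_nbr [simp]: "d < 3 \<Longrightarrow> side d (nbr d t) = side d t"
  by (cases t rule: tile_cases) (auto simp: less_3_cases insert_commute)

lemma side_eq_sideD:
  "d < 3 \<Longrightarrow> d' < 3 \<Longrightarrow> side d t = side d' s \<Longrightarrow> d = d' \<and> (s = t \<or> s = nbr d t)"
  by (cases t rule: tile_cases; cases s rule: tile_cases)
    (auto simp: less_3_cases doubleton_eq_iff split: if_splits)

lemma tiles_with_side: "d < 3 \<Longrightarrow> {s. side d t \<in> tri_edges s} = {t, nbr d t}"
  by (auto simp: mem_tri_edges_iff dest: side_eq_sideD)

lemma tiles_adjacent_iff_nbr: "tiles_adjacent s t \<longleftrightarrow> (\<exists>d<3. t = nbr d s)"
proof
  assume "tiles_adjacent s t"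
  then obtain e where "s \<noteq> t" "e \<in> tri_edges s" "e \<in> tri_edges t"
    unfolding tiles_adjacent_def by blast
  then obtain d where "d < 3" "side d s \<in> tri_edges t"
    unfolding mem_tri_edges_iff[of e s] by blast
  then have "t \<in> {x. side d s \<in> tri_edges x}" by simp
  then have "t \<in> {s, nbr d s}" by (simp only: tiles_with_side[OF \<open>d < 3\<close>])
  with \<open>d < 3\<close> \<open>s \<noteq> t\<close> show "\<exists>d<3. t = nbr d s" by blast
next
  assume "\<exists>d<3. t = nbr d s"
  then obtain d where d: "d < 3" "t = nbr d s" by blast
  then have "side d s \<in> tri_edges s \<inter> tri_edges t"
    using tiles_with_side[OF d(1), of s] by blast
  with d show "tiles_adjacent s t"
    unfolding tiles_adjacent_def by auto
qed

lemma tiles_adjacent_nbr: "d < 3 \<Longrightarrow> tiles_adjacent t (nbr d t)"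
  by (auto simp: tiles_adjacent_iff_nbr)

declare nbr.simps [simp del] side.simps [simp del]


section \<open>Perimeter as a count of boundary sides\<close>

definition boundary :: "tile set \<Rightarrow> (tile \<times> nat) set" where
  "boundary A = {(t, d). t \<in> A \<and> d < 3 \<and> nbr d t \<notin> A}"

lemma finite_boundary: "finite A \<Longrightarrow> finite (boundary A)"
  by (rule finite_subset[of _ "A \<times> {..<3}"]) (auto simp: boundary_def)

lemma perimeter_eq_card_boundary: "perimeter A = card (boundary A)"
proof -
  have tiles_with: "{s \<in> A. side d t \<in> tri_edges s} = A \<inter> {t, nbr d t}" if "d < 3" for d t
    using tiles_with_side[OF that] by blast
  have "inj_on (\<lambda>(t, d). side d t) (boundary A)"
    by (rule inj_onI) (auto simp: boundary_def dest: side_eq_sideD)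
  moreover have "{e. card {t \<in> A. e \<in> tri_edges t} = 1} = (\<lambda>(t, d). side d t) ` boundary A"
  proof (intro equalityI subsetI)
    fix e assume "e \<in> {e. card {t \<in> A. e \<in> tri_edges t} = 1}"
    then obtain t where t: "{s \<in> A. e \<in> tri_edges s} = {t}" by (auto simp: card_1_singleton_iff)
    then obtain d where d: "d < 3" "e = side d t" by (auto simp: mem_tri_edges_iff)
    with t tiles_with have "A \<inter> {t, nbr d t} = {t}" by simp
    then have "nbr d t \<notin> A" using nbr_neq_self by blast
    then have "(t, d) \<in> boundary A" using d t by (auto simp: boundary_def)
    with d show "e \<in> (\<lambda>(t, d). side d t) ` boundary A" by force
  next
    fix e assume "e \<in> (\<lambda>(t, d). side d t) ` boundary A"
    then obtain t d where "(t, d) \<in> boundary A" "e = side d t" by auto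
    then have "{s \<in> A. e \<in> tri_edges s} = {t}" using tiles_with by (auto simp: boundary_def)
    then show "e \<in> {e. card {t \<in> A. e \<in> tri_edges t} = 1}" by simp
  qed
  ultimately show ?thesis
    unfolding perimeter_def by (simp add: card_image)
qed

definition shared_sides :: "tile set \<Rightarrow> tile \<Rightarrow> nat set" where
  "shared_sides A t = {d. d < 3 \<and> nbr d t \<in> A}"

lemma card_boundary_insert:
  assumes "finite A" "t \<notin> A"
  shows "card (boundary (insert t A)) + 2 * card (shared_sides A t) = card (boundary A) + 3"
proof -
  let ?J = "shared_sides A t"
  let ?kept = "{(s, d) \<in> boundary A. nbr d s \<noteq> t}"
  let ?covered = "{(s, d) \<in> boundary A. nbr d s = t}"
  let ?new = "Pair t ` ({..<3} - ?J)"
  have fin: "finite ?kept" "finite ?covered"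
    using finite_boundary[OF assms(1)] by (auto intro: finite_subset)
  have J: "?J \<subseteq> {..<3}" by (auto simp: shared_sides_def)
  have "boundary (insert t A) = ?kept \<union> ?new"
    using assms(2) by (auto simp: boundary_def shared_sides_def)
  moreover have "?kept \<inter> ?new = {}"
    using assms(2) by (auto simp: boundary_def)
  ultimately have new: "card (boundary (insert t A)) = card ?kept + card ?new"
    using fin by (simp add: card_Un_disjoint)
  have "?kept \<union> ?covered = boundary A"
    by blast
  moreover have "card (?kept \<union> ?covered) = card ?kept + card ?covered"
    by (rule card_Un_disjoint[OF fin]) blast
  ultimately have old: "card (boundary A) = card ?kept + card ?covered"
    by simp
  have "?covered = (\<lambda>d. (nbr d t, d)) ` ?J"
  proof (intro equalityI subsetI)
    fix p assume "p \<in> ?covered"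
    then obtain s d where "p = (s, d)" "s \<in> A" "d < 3" "nbr d s = t"
      by (auto simp: boundary_def)
    moreover from this have "s = nbr d t" using nbr_nbr[of d s] by simp
    ultimately show "p \<in> (\<lambda>d. (nbr d t, d)) ` ?J"
      by (auto simp: shared_sides_def)
  qed (use assms(2) in \<open>auto simp: boundary_def shared_sides_def\<close>)
  then have "card ?covered = card ?J"
    by (simp add: card_image inj_on_def)
  moreover have "card ?new = 3 - card ?J"
    using J by (simp add: card_image inj_on_def card_Diff_subset finite_subset)
  moreover have "card ?J \<le> 3"
    using card_mono[OF _ J] by simp
  ultimately show ?thesis
    using new old by linarith
qed

lemma even_card_boundary_plus_card: "finite A \<Longrightarrow> even (card (boundary A) + card A)"
proof (induction A rule: finite_induct)
  case empty
  then show ?case by (simp add: boundary_def)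
next
  case (insert t A)
  then have "card (insert t A) = Suc (card A)" by simp
  with insert.IH card_boundary_insert[OF insert(1,2)] show ?case by presburger
qed

lemma even_perimeter_plus_card: "finite A \<Longrightarrow> even (perimeter A + card A)"
  using even_card_boundary_plus_card by (simp add: perimeter_eq_card_boundary)


section \<open>Strips\<close>

text \<open>One of the three directions: strip t indexes the strip of tiles between two consecutive
  parallel lattice lines that contains t, the tiles of a strip are ordered by pos, and the sides
  in dirs are those crossing the strips.\<close>

locale strip_family =
  fixes strip pos :: "tile \<Rightarrow> int" and fwd bwd :: "tile \<Rightarrow> nat" and dirs :: "nat set"
  assumes fwd_in_dirs: "fwd t \<in> dirs" and bwd_in_dirs: "bwd t \<in> dirs"
    and dirs_cases: "d \<in> dirs \<Longrightarrow> d = fwd t \<or> d = bwd t"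
    and fwd_neq_bwd: "fwd t \<noteq> bwd t"
    and fwd_less_3: "fwd t < 3" and bwd_less_3: "bwd t < 3"
    and strip_nbr_fwd: "strip (nbr (fwd t) t) = strip t"
    and pos_nbr_fwd: "pos (nbr (fwd t) t) = pos t + 1"
    and strip_nbr_bwd: "strip (nbr (bwd t) t) = strip t"
    and pos_nbr_bwd: "pos (nbr (bwd t) t) = pos t - 1"
    and strip_pos_inj: "strip s = strip t \<Longrightarrow> pos s = pos t \<Longrightarrow> s = t"
begin

definition strip_boundary :: "tile set \<Rightarrow> int \<Rightarrow> (tile \<times> nat) set" where
  "strip_boundary A v = {(t, d) \<in> boundary A. d \<in> dirs \<and> strip t = v}"

definition strip_convex :: "tile set \<Rightarrow> bool" where
  "strip_convex A \<longleftrightarrow> (\<forall>s\<in>A. \<forall>t\<in>A. \<forall>r.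
     strip s = strip r \<longrightarrow> strip t = strip r \<longrightarrow> pos s \<le> pos r \<longrightarrow> pos r \<le> pos t \<longrightarrow> r \<in> A)"

lemma finite_strip_boundary: "finite A \<Longrightarrow> finite (strip_boundary A v)"
  by (rule finite_subset[OF _ finite_boundary]) (auto simp: strip_boundary_def)

lemma strip_has_last:
  assumes "finite A" "v \<in> strip ` A"
  obtains t where "t \<in> A" "strip t = v" "\<And>s. s \<in> A \<Longrightarrow> strip s = v \<Longrightarrow> pos s \<le> pos t"
  using ex_is_arg_min_if_finite[of "{t \<in> A. strip t = v}" "\<lambda>t. - pos t"] assms
  by (fastforce simp: is_arg_min_linorder)

lemma strip_has_first:
  assumes "finite A" "v \<in> strip ` A"
  obtains t where "t \<in> A" "strip t = v" "\<And>s. s \<in> A \<Longrightarrow> strip s = v \<Longrightarrow> pos t \<le> pos s"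
  using ex_is_arg_min_if_finite[of "{t \<in> A. strip t = v}" pos] assms
  by (fastforce simp: is_arg_min_linorder)

lemma card_strip_boundary_ge:
  assumes "finite A" "v \<in> strip ` A"
  shows "2 \<le> card (strip_boundary A v)"
proof -
  obtain tl where tl: "tl \<in> A" "strip tl = v" "\<And>s. s \<in> A \<Longrightarrow> strip s = v \<Longrightarrow> pos s \<le> pos tl"
    by (blast intro: strip_has_last[OF assms])
  obtain tf where tf: "tf \<in> A" "strip tf = v" "\<And>s. s \<in> A \<Longrightarrow> strip s = v \<Longrightarrow> pos tf \<le> pos s"
    by (blast intro: strip_has_first[OF assms])
  have "nbr (fwd tl) tl \<notin> A"
    using tl(3)[of "nbr (fwd tl) tl"] tl(2) by (auto simp: strip_nbr_fwd pos_nbr_fwd)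
  then have "(tl, fwd tl) \<in> strip_boundary A v"
    using tl fwd_in_dirs fwd_less_3 by (auto simp: strip_boundary_def boundary_def)
  moreover have "nbr (bwd tf) tf \<notin> A"
    using tf(3)[of "nbr (bwd tf) tf"] tf(2) by (auto simp: strip_nbr_bwd pos_nbr_bwd)
  then have "(tf, bwd tf) \<in> strip_boundary A v"
    using tf bwd_in_dirs bwd_less_3 by (auto simp: strip_boundary_def boundary_def)
  moreover have "(tl, fwd tl) \<noteq> (tf, bwd tf)"
    using fwd_neq_bwd by auto
  ultimately have "card {(tl, fwd tl), (tf, bwd tf)} \<le> card (strip_boundary A v)"
    by (intro card_mono finite_strip_boundary assms(1)) auto
  with \<open>(tl, fwd tl) \<noteq> (tf, bwd tf)\<close> show ?thesis by simp
qed

lemma pos_le_if_fwd_boundary: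
  assumes "strip_convex A" "(t, fwd t) \<in> boundary A" "s \<in> A" "strip s = strip t"
  shows "pos s \<le> pos t"
proof (rule ccontr)
  assume "\<not> pos s \<le> pos t"
  have "nbr (fwd t) t \<in> A"
  proof (rule assms(1)[unfolded strip_convex_def, rule_format, of t s])
    show "t \<in> A" using assms(2) by (simp add: boundary_def)
    show "pos (nbr (fwd t) t) \<le> pos s" using \<open>\<not> pos s \<le> pos t\<close> by (simp add: pos_nbr_fwd)
  qed (use assms(3,4) in \<open>simp_all add: strip_nbr_fwd pos_nbr_fwd\<close>)
  with assms(2) show False by (simp add: boundary_def)
qed

lemma pos_ge_if_bwd_boundary:
  assumes "strip_convex A" "(t, bwd t) \<in> boundary A" "s \<in> A" "strip s = strip t"
  shows "pos t \<le> pos s"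
proof (rule ccontr)
  assume "\<not> pos t \<le> pos s"
  have "nbr (bwd t) t \<in> A"
  proof (rule assms(1)[unfolded strip_convex_def, rule_format, of s t])
    show "t \<in> A" using assms(2) by (simp add: boundary_def)
    show "pos s \<le> pos (nbr (bwd t) t)" using \<open>\<not> pos t \<le> pos s\<close> by (simp add: pos_nbr_bwd)
  qed (use assms(3,4) in \<open>simp_all add: strip_nbr_bwd pos_nbr_bwd\<close>)
  with assms(2) show False by (simp add: boundary_def)
qed

lemma card_strip_boundary_le:
  assumes "finite A" "strip_convex A"
  shows "card (strip_boundary A v) \<le> 2"
proof (cases "v \<in> strip ` A")
  case False
  then have "strip_boundary A v = {}" by (auto simp: strip_boundary_def boundary_def)
  then show ?thesis by simp
next
  case True
  obtain tl where tl: "tl \<in> A" "strip tl = v" "\<And>s. s \<in> A \<Longrightarrow> strip s = v \<Longrightarrow> pos s \<le> pos tl"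
    by (blast intro: strip_has_last[OF assms(1) True])
  obtain tf where tf: "tf \<in> A" "strip tf = v" "\<And>s. s \<in> A \<Longrightarrow> strip s = v \<Longrightarrow> pos tf \<le> pos s"
    by (blast intro: strip_has_first[OF assms(1) True])
  have "strip_boundary A v \<subseteq> {(tl, fwd tl), (tf, bwd tf)}"
  proof
    fix p assume "p \<in> strip_boundary A v"
    then obtain t d where p: "p = (t, d)" and t: "(t, d) \<in> boundary A" "t \<in> A" "strip t = v"
      and "d \<in> dirs"
      by (auto simp: strip_boundary_def boundary_def)
    from dirs_cases[OF \<open>d \<in> dirs\<close>] consider "d = fwd t" | "d = bwd t" by blast
    then show "p \<in> {(tl, fwd tl), (tf, bwd tf)}"
    proof cases
      case 1
      with t(1) have "pos tl \<le> pos t"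
        using pos_le_if_fwd_boundary[OF assms(2) _ tl(1)] t(3) tl(2) by simp
      then have "t = tl"
        using tl(3)[OF t(2,3)] t(3) tl(2) by (intro strip_pos_inj) simp_all
      with 1 p show ?thesis by simp
    next
      case 2
      with t(1) have "pos t \<le> pos tf"
        using pos_ge_if_bwd_boundary[OF assms(2) _ tf(1)] t(3) tf(2) by simp
      then have "t = tf"
        using tf(3)[OF t(2,3)] t(3) tf(2) by (intro strip_pos_inj) simp_all
      with 2 p show ?thesis by simp
    qed
  qed
  then have "card (strip_boundary A v) \<le> card {(tl, fwd tl), (tf, bwd tf)}"
    by (rule card_mono[rotated]) simp
  also have "\<dots> \<le> 2" by (simp add: card_insert_if)
  finally show ?thesis .
qed

lemma card_boundary_dirs_eq_sum:
  assumes "finite A"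
  shows "card {(t, d) \<in> boundary A. d \<in> dirs} = (\<Sum>v\<in>strip ` A. card (strip_boundary A v))"
proof -
  have "{(t, d) \<in> boundary A. d \<in> dirs} = (\<Union>v\<in>strip ` A. strip_boundary A v)"
    by (auto simp: strip_boundary_def boundary_def)
  also have "card \<dots> = (\<Sum>v\<in>strip ` A. card (strip_boundary A v))"
  proof (rule card_UN_disjoint)
    show "\<forall>v\<in>strip ` A. finite (strip_boundary A v)"
      using finite_strip_boundary[OF assms] by blast
  qed (auto simp: assms strip_boundary_def)
  finally show ?thesis .
qed

lemma two_card_strips_le:
  "finite A \<Longrightarrow> 2 * card (strip ` A) \<le> card {(t, d) \<in> boundary A. d \<in> dirs}"
  using sum_bounded_below[of "strip ` A" 2 "\<lambda>v. card (strip_boundary A v)"]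
  by (simp add: card_boundary_dirs_eq_sum card_strip_boundary_ge mult.commute)

lemma card_boundary_dirs_le:
  "finite A \<Longrightarrow> strip_convex A \<Longrightarrow>
    card {(t, d) \<in> boundary A. d \<in> dirs} \<le> 2 * card (strip ` A)"
  using sum_bounded_above[of "strip ` A" "\<lambda>v. card (strip_boundary A v)" 2]
  by (simp add: card_boundary_dirs_eq_sum card_strip_boundary_le mult.commute)

definition monotone_along :: "(tile \<Rightarrow> int) \<Rightarrow> bool" where
  "monotone_along f \<longleftrightarrow> (\<forall>s t. strip s = strip t \<longrightarrow> pos s \<le> pos t \<longrightarrow> f s \<le> f t)"

lemma strip_convex_Int: "strip_convex A \<Longrightarrow> strip_convex B \<Longrightarrow> strip_convex (A \<inter> B)"
  unfolding strip_convex_def by blast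

lemma strip_convex_interval:
  assumes "monotone_along f \<or> monotone_along (\<lambda>t. - f t)"
  shows "strip_convex {t. f t \<in> {lo..hi}}"
  using assms unfolding strip_convex_def monotone_along_def
  by (smt (verit, best) atLeastAtMost_iff mem_Collect_eq)

end

text \<open>xc, yc and zc index the strips between consecutive lattice lines a = const, b = const
  and a + b = const.\<close>

fun xc :: "tile \<Rightarrow> int" where "xc (a, b, u) = a"
fun yc :: "tile \<Rightarrow> int" where "yc (a, b, u) = b"
fun zc :: "tile \<Rightarrow> int" where "zc (a, b, u) = a + b + (if u then 0 else 1)"
fun is_up :: "tile \<Rightarrow> bool" where "is_up (a, b, u) = u"

fun posx :: "tile \<Rightarrow> int" where "posx (a, b, u) = 2 * b + (if u then 0 else 1)"
fun posy :: "tile \<Rightarrow> int" where "posy (a, b, u) = 2 * a + (if u then 0 else 1)"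

lemma coordinate_eqs:
  "posx t = 2 * yc t + (if is_up t then 0 else 1)" "posy t = 2 * xc t + (if is_up t then 0 else 1)"
  "zc t = xc t + yc t + (if is_up t then 0 else 1)"
  by (cases t; simp)+

interpretation xs: strip_family xc posx
  "\<lambda>t. if is_up t then 2 else 0" "\<lambda>t. if is_up t then 0 else 2" "{0, 2}"
proof unfold_locales
  show "xc s = xc t \<Longrightarrow> posx s = posx t \<Longrightarrow> s = t" for s t
    by (cases s rule: tile_cases; cases t rule: tile_cases) (auto, presburger+)
qed (auto simp: nbr.simps elim: tile_cases)

interpretation ys: strip_family yc posy
  "\<lambda>t. if is_up t then 2 else 1" "\<lambda>t. if is_up t then 1 else 2" "{1, 2}"
proof unfold_locales
  show "yc s = yc t \<Longrightarrow> posy s = posy t \<Longrightarrow> s = t" for s t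
    by (cases s rule: tile_cases; cases t rule: tile_cases) (auto, presburger+)
qed (auto simp: nbr.simps elim: tile_cases)

interpretation zs: strip_family zc posx
  "\<lambda>t. if is_up t then 1 else 0" "\<lambda>t. if is_up t then 0 else 1" "{0, 1}"
proof unfold_locales
  show "zc s = zc t \<Longrightarrow> posx s = posx t \<Longrightarrow> s = t" for s t
    by (cases s rule: tile_cases; cases t rule: tile_cases) (auto, presburger+)
qed (auto simp: nbr.simps elim: tile_cases)

lemma card_boundary_sides_in:
  assumes "finite A" "finite P"
  shows "card {(t, d) \<in> boundary A. d \<in> P} = (\<Sum>i\<in>P. card {(t, d) \<in> boundary A. d = i})"
proof -
  have "{(t, d) \<in> boundary A. d \<in> P} = (\<Union>i\<in>P. {(t, d) \<in> boundary A. d = i})"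
    by auto
  also have "card \<dots> = (\<Sum>i\<in>P. card {(t, d) \<in> boundary A. d = i})"
    by (rule card_UN_disjoint)
      (auto simp: assms(2) intro: finite_subset[OF _ finite_boundary[OF assms(1)]])
  finally show ?thesis .
qed

lemma two_perimeter_eq:
  assumes "finite A"
  shows "2 * perimeter A = card {(t, d) \<in> boundary A. d \<in> {0, 2}}
    + card {(t, d) \<in> boundary A. d \<in> {1, 2}} + card {(t, d) \<in> boundary A. d \<in> {0, 1}}"
proof -
  have "boundary A = {(t, d) \<in> boundary A. d \<in> {0, 1, 2}}"
    by (auto simp: boundary_def)
  then have "perimeter A = card {(t, d) \<in> boundary A. d \<in> {0, 1, 2}}"
    by (simp add: perimeter_eq_card_boundary)
  then show ?thesis
    using card_boundary_sides_in[OF assms, of "{0, 1, 2}"]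
      card_boundary_sides_in[OF assms, of "{0, 2}"] card_boundary_sides_in[OF assms, of "{1, 2}"]
      card_boundary_sides_in[OF assms, of "{0, 1}"]
    by simp
qed

lemma card_strips_le_perimeter:
  "finite A \<Longrightarrow> card (xc ` A) + card (yc ` A) + card (zc ` A) \<le> perimeter A"
  using xs.two_card_strips_le ys.two_card_strips_le zs.two_card_strips_le two_perimeter_eq
  by fastforce

lemma perimeter_le_card_strips:
  "finite A \<Longrightarrow> xs.strip_convex A \<Longrightarrow> ys.strip_convex A \<Longrightarrow> zs.strip_convex A \<Longrightarrow>
    perimeter A \<le> card (xc ` A) + card (yc ` A) + card (zc ` A)"
  using xs.card_boundary_dirs_le ys.card_boundary_dirs_le zs.card_boundary_dirs_le two_perimeter_eq
  by fastforce


section \<open>Triangles and hexagons\<close>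

lemma zc_bounds: "xc t + yc t \<le> zc t" "zc t \<le> xc t + yc t + 1"
  by (cases t; simp)+

definition triangle :: "int \<Rightarrow> int \<Rightarrow> int \<Rightarrow> tile set" where
  "triangle a b c = {t. a \<le> xc t \<and> b \<le> yc t \<and> zc t \<le> c}"

definition hexagon :: "int \<Rightarrow> int \<Rightarrow> int \<Rightarrow> int \<Rightarrow> int \<Rightarrow> int \<Rightarrow> tile set" where
  "hexagon x0 x1 y0 y1 z0 z1 = {t. xc t \<in> {x0..x1} \<and> yc t \<in> {y0..y1} \<and> zc t \<in> {z0..z1}}"

lemma finite_triangle: "finite (triangle a b c)"
  by (rule finite_subset[of _ "{a..c - b} \<times> {b..c - a} \<times> UNIV"])
    (auto simp: triangle_def split: if_splits)

lemma triangle_row_eq: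
  "{t. a \<le> xc t \<and> b \<le> yc t \<and> zc t = a + b + int m} =
    (\<lambda>i. (a + i, b + int m - i, True)) ` {0..int m} \<union>
    (\<lambda>i. (a + i, b + int m - 1 - i, False)) ` {0..int m - 1}"
proof (intro equalityI subsetI)
  fix t assume "t \<in> {t. a \<le> xc t \<and> b \<le> yc t \<and> zc t = a + b + int m}"
  then show "t \<in> (\<lambda>i. (a + i, b + int m - i, True)) ` {0..int m} \<union>
    (\<lambda>i. (a + i, b + int m - 1 - i, False)) ` {0..int m - 1}"
    by (cases t rule: tile_cases) (auto simp: image_iff intro!: bexI[of _ "xc t - a"])
qed auto

lemma card_triangle_row: "card {t. a \<le> xc t \<and> b \<le> yc t \<and> zc t = a + b + int m} = 2 * m + 1"
proof -
  have "card ((\<lambda>i. (a + i, b + int m - i, True)) ` {0..int m}) = m + 1"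
    by (subst card_image) (auto simp: inj_on_def)
  moreover have "card ((\<lambda>i. (a + i, b + int m - 1 - i, False)) ` {0..int m - 1}) = m"
    by (subst card_image) (auto simp: inj_on_def)
  ultimately show ?thesis
    unfolding triangle_row_eq by (subst card_Un_disjoint) auto
qed

lemma card_triangle_nat: "card (triangle a b (a + b + int m - 1)) = m * m"
proof (induction m)
  case 0
  have "triangle a b (a + b - 1) = {}"
    by (auto simp: triangle_def split: if_splits)
  then show ?case by simp
next
  case (Suc m)
  let ?row = "{t. a \<le> xc t \<and> b \<le> yc t \<and> zc t = a + b + int m}"
  have "triangle a b (a + b + int (Suc m) - 1) = triangle a b (a + b + int m - 1) \<union> ?row"
    by (auto simp: triangle_def)
  moreover have "card (triangle a b (a + b + int m - 1) \<union> ?row) =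
      card (triangle a b (a + b + int m - 1)) + card ?row"
    by (rule card_Un_disjoint[OF finite_triangle]) (auto simp: triangle_row_eq triangle_def)
  ultimately show ?case
    using Suc.IH card_triangle_row[of a b m] by simp
qed

lemma card_triangle: "0 \<le> c - a - b + 1 \<Longrightarrow> int (card (triangle a b c)) = (c - a - b + 1)\<^sup>2"
  using card_triangle_nat[of a b "nat (c - a - b + 1)"] by (simp add: power2_eq_square)

text \<open>The hexagon is the triangle xc \<ge> x0, yc \<ge> y0, zc \<le> z1 with three disjoint corner
  triangles cut off.\<close>

lemma card_hexagon:
  assumes "0 \<le> z1 - x1 - y0" "0 \<le> z1 - x0 - y1" "0 \<le> z0 - x0 - y0"
    and "z1 \<le> x1 + y1 + 1" "z0 \<le> x1 + y0 + 1" "z0 \<le> x0 + y1 + 1"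
    and "x0 \<le> x1 + 1" "y0 \<le> y1 + 1" "z0 \<le> z1 + 1"
  shows "int (card (hexagon x0 x1 y0 y1 z0 z1)) =
    (z1 - x0 - y0 + 1)\<^sup>2 - (z1 - x1 - y0)\<^sup>2 - (z1 - x0 - y1)\<^sup>2 - (z0 - x0 - y0)\<^sup>2"
proof -
  let ?T = "triangle x0 y0 z1"
  let ?C1 = "triangle (x1 + 1) y0 z1" and ?C2 = "triangle x0 (y1 + 1) z1"
    and ?C3 = "triangle x0 y0 (z0 - 1)"
  have corners: "?C1 \<union> ?C2 \<union> ?C3 \<subseteq> ?T"
    using assms(7-9) by (auto simp: triangle_def)
  have "?C1 \<inter> ?C2 = {}" "(?C1 \<union> ?C2) \<inter> ?C3 = {}"
    using assms(4-6) by (auto simp: triangle_def split: if_splits)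
  then have "card (?C1 \<union> ?C2 \<union> ?C3) = card ?C1 + card ?C2 + card ?C3"
    by (simp add: card_Un_disjoint finite_triangle)
  moreover have "hexagon x0 x1 y0 y1 z0 z1 = ?T - (?C1 \<union> ?C2 \<union> ?C3)"
    by (auto simp: hexagon_def triangle_def)
  moreover have "card (?C1 \<union> ?C2 \<union> ?C3) \<le> card ?T"
    by (rule card_mono[OF finite_triangle corners])
  ultimately have "int (card (hexagon x0 x1 y0 y1 z0 z1)) =
      int (card ?T) - int (card ?C1) - int (card ?C2) - int (card ?C3)"
    by (simp add: card_Diff_subset[OF _ corners] finite_triangle)
  moreover have "int (card ?T) = (z1 - x0 - y0 + 1)\<^sup>2"
    using card_triangle[of z1 x0 y0] assms(3,9) by simp
  moreover have "int (card ?C1) = (z1 - x1 - y0)\<^sup>2"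
    using card_triangle[of z1 "x1 + 1" y0] assms(1) by simp
  moreover have "int (card ?C2) = (z1 - x0 - y1)\<^sup>2"
    using card_triangle[of z1 x0 "y1 + 1"] assms(2) by simp
  moreover have "int (card ?C3) = (z0 - x0 - y0)\<^sup>2"
    using card_triangle[of "z0 - 1" x0 y0] assms(3) by simp
  ultimately show ?thesis
    by linarith
qed

lemma monotone_along_coordinates:
  "xs.monotone_along xc" "xs.monotone_along yc" "xs.monotone_along zc"
  "ys.monotone_along xc" "ys.monotone_along yc" "ys.monotone_along zc"
  "zs.monotone_along (\<lambda>t. - xc t)" "zs.monotone_along yc" "zs.monotone_along zc"
  unfolding xs.monotone_along_def ys.monotone_along_def zs.monotone_along_def
  by (auto elim!: tile_cases; presburger)+

lemma strip_convex_hexagon: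
  "xs.strip_convex (hexagon x0 x1 y0 y1 z0 z1)" "ys.strip_convex (hexagon x0 x1 y0 y1 z0 z1)"
  "zs.strip_convex (hexagon x0 x1 y0 y1 z0 z1)"
proof -
  have hex: "hexagon x0 x1 y0 y1 z0 z1 =
      {t. xc t \<in> {x0..x1}} \<inter> {t. yc t \<in> {y0..y1}} \<inter> {t. zc t \<in> {z0..z1}}"
    by (auto simp: hexagon_def)
  note mono = monotone_along_coordinates
  show "xs.strip_convex (hexagon x0 x1 y0 y1 z0 z1)"
    unfolding hex by (intro xs.strip_convex_Int xs.strip_convex_interval) (use mono in blast)+
  show "ys.strip_convex (hexagon x0 x1 y0 y1 z0 z1)"
    unfolding hex by (intro ys.strip_convex_Int ys.strip_convex_interval) (use mono in blast)+
  show "zs.strip_convex (hexagon x0 x1 y0 y1 z0 z1)"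
    unfolding hex by (intro zs.strip_convex_Int zs.strip_convex_interval) (use mono in blast)+
qed

lemma card_le_hexagon_hull:
  assumes "finite A"
    and "xc ` A \<subseteq> {x0..x1}" "yc ` A \<subseteq> {y0..y1}" "zc ` A \<subseteq> {z0..z1}"
    and "x0 \<in> xc ` A" "x1 \<in> xc ` A" "y0 \<in> yc ` A" "y1 \<in> yc ` A" "z0 \<in> zc ` A" "z1 \<in> zc ` A"
  shows "int (card A) \<le>
    (z1 - x0 - y0 + 1)\<^sup>2 - (z1 - x1 - y0)\<^sup>2 - (z1 - x0 - y1)\<^sup>2 - (z0 - x0 - y0)\<^sup>2"
proof -
  have bounds: "x0 \<le> xc t" "xc t \<le> x1" "y0 \<le> yc t" "yc t \<le> y1" "z0 \<le> zc t" "zc t \<le> z1"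
    if "t \<in> A" for t
    using assms(2-4) that by auto
  obtain tx0 tx1 where "tx0 \<in> A" "xc tx0 = x0" "tx1 \<in> A" "xc tx1 = x1"
    using assms(5,6) by blast
  moreover obtain ty0 ty1 where "ty0 \<in> A" "yc ty0 = y0" "ty1 \<in> A" "yc ty1 = y1"
    using assms(7,8) by blast
  moreover obtain tz0 tz1 where "tz0 \<in> A" "zc tz0 = z0" "tz1 \<in> A" "zc tz1 = z1"
    using assms(9,10) by blast
  ultimately have "0 \<le> z1 - x1 - y0" "0 \<le> z1 - x0 - y1" "0 \<le> z0 - x0 - y0"
    "z1 \<le> x1 + y1 + 1" "z0 \<le> x1 + y0 + 1" "z0 \<le> x0 + y1 + 1"
    "x0 \<le> x1 + 1" "y0 \<le> y1 + 1" "z0 \<le> z1 + 1"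
    using bounds zc_bounds by (smt (verit))+
  note hexagon_conditions = this
  have "finite (hexagon x0 x1 y0 y1 z0 z1)"
    by (rule finite_subset[OF _ finite_triangle[of x0 y0 z1]]) (auto simp: hexagon_def triangle_def)
  moreover have "A \<subseteq> hexagon x0 x1 y0 y1 z0 z1"
    using bounds by (auto simp: hexagon_def)
  ultimately have "card A \<le> card (hexagon x0 x1 y0 y1 z0 z1)"
    by (rule card_mono)
  also have "int \<dots> =
      (z1 - x0 - y0 + 1)\<^sup>2 - (z1 - x1 - y0)\<^sup>2 - (z1 - x0 - y1)\<^sup>2 - (z0 - x0 - y0)\<^sup>2"
    using hexagon_conditions by (rule card_hexagon)
  finally show ?thesis by linarith
qed


section \<open>The isoperimetric inequality\<close>

definition adj_rel :: "tile set \<Rightarrow> (tile \<times> tile) set" where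
  "adj_rel A = {(s, t). s \<in> A \<and> t \<in> A \<and> tiles_adjacent s t}"

lemma polyiamond_iff:
  "polyiamond A \<longleftrightarrow> finite A \<and> A \<noteq> {} \<and> (\<forall>s\<in>A. \<forall>t\<in>A. (s, t) \<in> (adj_rel A)\<^sup>*)"
  unfolding polyiamond_def adj_rel_def by simp

lemma strip_index_adjacent:
  assumes "tiles_adjacent s t"
  shows "\<bar>xc t - xc s\<bar> \<le> 1" "\<bar>yc t - yc s\<bar> \<le> 1" "\<bar>zc t - zc s\<bar> \<le> 1"
proof -
  obtain d where "d < 3" "t = nbr d s"
    using assms by (auto simp: tiles_adjacent_iff_nbr)
  then show "\<bar>xc t - xc s\<bar> \<le> 1" "\<bar>yc t - yc s\<bar> \<le> 1" "\<bar>zc t - zc s\<bar> \<le> 1"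
    by (cases s rule: tile_cases; auto simp: less_3_cases nbr.simps)+
qed

lemma values_between_attained:
  assumes f: "\<And>a b. tiles_adjacent a b \<Longrightarrow> \<bar>f b - f a\<bar> \<le> (1::int)"
  shows "(s, t) \<in> (adj_rel A)\<^sup>* \<Longrightarrow> s \<in> A \<Longrightarrow> f s \<le> v \<Longrightarrow> v \<le> f t \<Longrightarrow> v \<in> f ` A"
proof (induction arbitrary: v rule: rtrancl_induct)
  case base
  then have "v = f s" by simp
  with base show ?case by blast
next
  case (step m t)
  then have "t \<in> A" "\<bar>f t - f m\<bar> \<le> 1"
    using f by (auto simp: adj_rel_def)
  show ?case
  proof (cases "v \<le> f m")
    case True
    with step show ?thesis by blast
  next
    case False
    with step.prems \<open>\<bar>f t - f m\<bar> \<le> 1\<close> have "v = f t" by linarith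
    with \<open>t \<in> A\<close> show ?thesis by blast
  qed
qed

lemma card_image_polyiamond:
  assumes "polyiamond A" and f: "\<And>a b. tiles_adjacent a b \<Longrightarrow> \<bar>f b - f a\<bar> \<le> (1::int)"
  shows "int (card (f ` A)) = Max (f ` A) - Min (f ` A) + 1"
proof -
  have fin: "finite (f ` A)" and ne: "f ` A \<noteq> {}"
    using assms(1) by (auto simp: polyiamond_iff)
  obtain s t where st: "s \<in> A" "f s = Min (f ` A)" "t \<in> A" "f t = Max (f ` A)"
    using Min_in[OF fin ne] Max_in[OF fin ne] by (auto simp: image_iff)
  have conn: "(s, t) \<in> (adj_rel A)\<^sup>*"
    using assms(1) st by (simp add: polyiamond_iff)
  have "{Min (f ` A)..Max (f ` A)} \<subseteq> f ` A"
  proof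
    fix v assume "v \<in> {Min (f ` A)..Max (f ` A)}"
    with st show "v \<in> f ` A"
      using values_between_attained[of f, OF f conn \<open>s \<in> A\<close>] by simp
  qed
  moreover have "f ` A \<subseteq> {Min (f ` A)..Max (f ` A)}"
    using Min_le[OF fin] Max_ge[OF fin] by auto
  ultimately have "f ` A = {Min (f ` A)..Max (f ` A)}"
    by (rule antisym[rotated])
  then have "card (f ` A) = nat (Max (f ` A) - Min (f ` A) + 1)"
    by (metis card_atLeastAtMost_int)
  then show ?thesis
    using Min_le[OF fin Max_in[OF fin ne]] by simp
qed

lemma isoperimetric_defect:
  fixes T a b g :: int
  shows "(3 * T - a - b - g)\<^sup>2 - 6 * (T\<^sup>2 - a\<^sup>2 - b\<^sup>2 - g\<^sup>2) =
    3 * (T - a - b - g)\<^sup>2 + 2 * ((a - b)\<^sup>2 + (b - g)\<^sup>2 + (g - a)\<^sup>2)"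
  by (simp add: power2_eq_square algebra_simps)

theorem isoperimetric_inequality:
  assumes "polyiamond A"
  shows "6 * card A \<le> (perimeter A)\<^sup>2"
proof -
  have fin: "finite A" and ne: "A \<noteq> {}"
    using assms by (auto simp: polyiamond_iff)
  define x0 x1 y0 y1 z0 z1 where "x0 = Min (xc ` A)" "x1 = Max (xc ` A)"
    "y0 = Min (yc ` A)" "y1 = Max (yc ` A)" "z0 = Min (zc ` A)" "z1 = Max (zc ` A)"
  define T a b g where "T = z1 - x0 - y0 + 1" "a = z1 - x1 - y0" "b = z1 - x0 - y1" "g = z0 - x0 - y0"
  have range: "f ` A \<subseteq> {Min (f ` A)..Max (f ` A)}" "Min (f ` A) \<in> f ` A" "Max (f ` A) \<in> f ` A"
    for f :: "tile \<Rightarrow> int"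
    using fin ne by (auto intro: Min_le Max_ge)
  have area: "int (card A) \<le> T\<^sup>2 - a\<^sup>2 - b\<^sup>2 - g\<^sup>2"
    unfolding T_a_b_g_def x0_x1_y0_y1_z0_z1_def by (rule card_le_hexagon_hull[OF fin]) (rule range)+
  have "int (card (xc ` A)) + int (card (yc ` A)) + int (card (zc ` A)) = 3 * T - a - b - g"
    using card_image_polyiamond[OF assms strip_index_adjacent(1)]
      card_image_polyiamond[OF assms strip_index_adjacent(2)]
      card_image_polyiamond[OF assms strip_index_adjacent(3)]
    by (simp add: x0_x1_y0_y1_z0_z1_def T_a_b_g_def)
  moreover have "card (xc ` A) + card (yc ` A) + card (zc ` A) \<le> perimeter A"
    by (rule card_strips_le_perimeter[OF fin])
  ultimately have bound: "0 \<le> 3 * T - a - b - g" "3 * T - a - b - g \<le> int (perimeter A)"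
    by linarith+
  have "6 * int (card A) \<le> 6 * (T\<^sup>2 - a\<^sup>2 - b\<^sup>2 - g\<^sup>2)"
    using area by simp
  also have "\<dots> \<le> (3 * T - a - b - g)\<^sup>2"
    using isoperimetric_defect[of T a b g] by (smt (verit) zero_le_power2)
  also have "\<dots> \<le> (int (perimeter A))\<^sup>2"
    using bound by (rule power_mono[rotated])
  finally have "6 * int (card A) \<le> (int (perimeter A))\<^sup>2" .
  then show ?thesis
    by (simp flip: of_nat_power)
qed


lemma sym_adj_rel: "sym (adj_rel A)"
  by (auto simp: sym_def adj_rel_def tiles_adjacent_def)

lemma polyiamond_if_connected_to:
  assumes "finite A" "A \<noteq> {}" "\<And>t. t \<in> A \<Longrightarrow> (t, r) \<in> (adj_rel A)\<^sup>*"
  shows "polyiamond A"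
proof -
  have "(s, t) \<in> (adj_rel A)\<^sup>*" if "s \<in> A" "t \<in> A" for s t
  proof -
    have "(r, t) \<in> (adj_rel A)\<^sup>*"
      using assms(3)[OF that(2)] sym_adj_rel sym_rtrancl by (metis symD)
    with assms(3)[OF that(1)] show ?thesis by (rule rtrancl_trans)
  qed
  with assms(1,2) show ?thesis
    by (simp add: polyiamond_iff)
qed

lemma rtrancl_to_root_by_descent:
  fixes f :: "'a \<Rightarrow> nat"
  assumes "\<And>t. t \<in> A \<Longrightarrow> t \<noteq> r \<Longrightarrow> \<exists>s\<in>A. f s < f t \<and> (t, s) \<in> R\<^sup>*"
  shows "t \<in> A \<Longrightarrow> (t, r) \<in> R\<^sup>*"
proof (induction "f t" arbitrary: t rule: less_induct)
  case less
  show ?case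
  proof (cases "t = r")
    case False
    with assms less.prems obtain s where "s \<in> A" "f s < f t" "(t, s) \<in> R\<^sup>*"
      by blast
    with less.hyps show ?thesis
      by (meson rtrancl_trans)
  qed simp
qed

lemma polyiamond_insert:
  assumes "polyiamond A" "s \<in> A" "tiles_adjacent s u"
  shows "polyiamond (insert u A)"
proof (rule polyiamond_if_connected_to)
  show "finite (insert u A)" "insert u A \<noteq> {}"
    using assms(1) by (auto simp: polyiamond_iff)
  fix t assume "t \<in> insert u A"
  then show "(t, s) \<in> (adj_rel (insert u A))\<^sup>*"
  proof
    assume "t = u"
    then have "(t, s) \<in> adj_rel (insert u A)"
      using assms(2,3) sym_adj_rel by (auto simp: adj_rel_def tiles_adjacent_def)
    then show ?thesis by blast
  next
    assume "t \<in> A"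
    then have "(t, s) \<in> (adj_rel A)\<^sup>*"
      using assms(1,2) by (simp add: polyiamond_iff)
    moreover have "(adj_rel A)\<^sup>* \<subseteq> (adj_rel (insert u A))\<^sup>*"
      by (rule rtrancl_mono) (auto simp: adj_rel_def)
    ultimately show ?thesis by blast
  qed
qed

lemma exists_polyiamond_insert:
  assumes "polyiamond A"
  shows "\<exists>u. u \<notin> A \<and> polyiamond (insert u A) \<and> perimeter (insert u A) \<le> perimeter A + 1"
proof -
  have fin: "finite A" and "A \<noteq> {}"
    using assms by (auto simp: polyiamond_iff)
  then have "0 < card (xc ` A)"
    by (simp add: card_gt_0_iff)
  then have "boundary A \<noteq> {}"
    using xs.two_card_strips_le[OF fin] by auto
  then obtain t d where td: "t \<in> A" "d < 3" "nbr d t \<notin> A"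
    by (auto simp: boundary_def)
  define u where "u = nbr d t"
  have "d \<in> shared_sides A u"
    using td by (simp add: u_def shared_sides_def)
  moreover have "finite (shared_sides A u)"
    by (rule finite_subset[of _ "{..<3}"]) (auto simp: shared_sides_def)
  ultimately have "1 \<le> card (shared_sides A u)"
    by (metis One_nat_def Suc_leI card_gt_0_iff empty_iff)
  then have "perimeter (insert u A) \<le> perimeter A + 1"
    using card_boundary_insert[OF fin td(3)[folded u_def]]
    by (simp add: perimeter_eq_card_boundary)
  moreover have "tiles_adjacent t u"
    using td(2) by (auto simp: u_def tiles_adjacent_iff_nbr)
  ultimately show ?thesis
    using polyiamond_insert[OF assms td(1)] td(3) u_def by blast
qed


section \<open>Filling a hexagon\<close>

lemma discrete_intermediate_value:
  fixes g :: "nat \<Rightarrow> nat"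
  assumes "g 0 \<le> n" "n \<le> g K" "\<And>k. g (Suc k) \<le> g k + 2"
  shows "\<exists>k. g k = n \<or> g k + 1 = n"
proof -
  define k where "k = (LEAST k. n \<le> g k)"
  have "n \<le> g k"
    unfolding k_def by (rule LeastI[of _ K]) (rule assms(2))
  show ?thesis
  proof (cases k)
    case 0
    with assms(1) \<open>n \<le> g k\<close> show ?thesis by auto
  next
    case (Suc k')
    have "\<not> n \<le> g k'"
    proof
      assume "n \<le> g k'"
      then have "k \<le> k'"
        unfolding k_def by (rule Least_le)
      with Suc show False by simp
    qed
    moreover have "g k \<le> g k' + 2"
      using assms(3) Suc by simp
    ultimately have "g k = n \<or> g k' + 1 = n"
      using \<open>n \<le> g k\<close> by linarith
    then show ?thesis by blast
  qed
qed

locale hexagon_filling =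
  fixes T al be ga :: int
  assumes T_pos: "1 \<le> T" and corners_nonneg: "0 \<le> al" "0 \<le> be" "0 \<le> ga"
    and corners_sum: "al + be + ga \<le> T" and ga_less: "ga < T"
begin

text \<open>H is the triangle 0 \<le> xc, 0 \<le> yc, zc \<le> T - 1 with corner triangles of sides al, be
  and ga cut off.\<close>

definition H :: "tile set" where
  "H = hexagon 0 (T - al - 1) 0 (T - be - 1) ga (T - 1)"

text \<open>On H we have 0 \<le> posy t < 2 * T + 2, so rank enumerates H row by row.\<close>

definition rank :: "tile \<Rightarrow> int" where
  "rank t = (2 * T + 2) * yc t + posy t"

definition initial :: "int \<Rightarrow> tile set" where
  "initial j = {t \<in> H. rank t \<le> j}"

lemma mem_H:
  "(a, b, u) \<in> H \<longleftrightarrow> 0 \<le> a \<and> a \<le> T - al - 1 \<and> 0 \<le> b \<and> b \<le> T - be - 1 \<and>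
     ga \<le> a + b + (if u then 0 else 1) \<and> a + b + (if u then 0 else 1) \<le> T - 1"
  by (simp add: H_def hexagon_def)

lemma finite_H: "finite H"
  by (rule finite_subset[OF _ finite_triangle[of 0 0 "T - 1"]]) (auto simp: H_def hexagon_def triangle_def)

lemma card_H: "int (card H) = T\<^sup>2 - al\<^sup>2 - be\<^sup>2 - ga\<^sup>2"
proof -
  have "int (card H) = (T - 1 - 0 - 0 + 1)\<^sup>2 - (T - 1 - (T - al - 1) - 0)\<^sup>2
      - (T - 1 - 0 - (T - be - 1))\<^sup>2 - (ga - 0 - 0)\<^sup>2"
    unfolding H_def by (rule card_hexagon) (use T_pos corners_nonneg corners_sum ga_less in linarith)+
  then show ?thesis by simp
qed

lemma posy_bounds: "t \<in> H \<Longrightarrow> 0 \<le> posy t \<and> posy t < 2 * T + 2"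
  by (cases t rule: tile_cases) (use corners_nonneg in \<open>auto simp: mem_H\<close>)

lemma rank_bounds: "t \<in> H \<Longrightarrow> 0 \<le> rank t \<and> rank t < (2 * T + 2) * T"
proof -
  assume t: "t \<in> H"
  then have "0 \<le> yc t" "yc t \<le> T - 1"
    using corners_nonneg by (cases t rule: tile_cases; auto simp: mem_H)+
  then have "0 \<le> (2 * T + 2) * yc t" "(2 * T + 2) * yc t \<le> (2 * T + 2) * (T - 1)"
    using T_pos by (simp_all add: mult_left_mono)
  with posy_bounds[OF t] show ?thesis
    by (simp add: rank_def algebra_simps)
qed

lemma inj_on_rank: "inj_on rank H"
proof (rule inj_onI)
  fix s t assume "s \<in> H" "t \<in> H" "rank s = rank t"
  moreover have "rank x div (2 * T + 2) = yc x" "rank x mod (2 * T + 2) = posy x" if "x \<in> H" for x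
    using posy_bounds[OF that] by (simp_all add: rank_def)
  ultimately show "s = t"
    by (intro ys.strip_pos_inj) metis+
qed


lemma finite_initial: "finite (initial j)"
  using finite_H by (simp add: initial_def)

lemma initial_below_zero: "j < 0 \<Longrightarrow> initial j = {}"
  using rank_bounds by (fastforce simp: initial_def)

lemma initial_top: "(2 * T + 2) * T \<le> j \<Longrightarrow> initial j = H"
  using rank_bounds by (fastforce simp: initial_def)

lemma card_initial_add_2: "card (initial (j + 2)) \<le> card (initial j) + 2"
proof -
  let ?new = "{t \<in> H. rank t \<in> {j + 1, j + 2}}"
  have "card ?new \<le> card {j + 1, j + 2}"
    by (rule card_inj_on_le[OF inj_on_subset[OF inj_on_rank]]) auto
  have "initial (j + 2) \<subseteq> initial j \<union> ?new"
    by (auto simp: initial_def)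
  then have "card (initial (j + 2)) \<le> card (initial j \<union> ?new)"
    by (rule card_mono[rotated]) (simp add: finite_initial finite_H)
  also have "\<dots> \<le> card (initial j) + card ?new"
    by (rule card_Un_le)
  finally show ?thesis
    using \<open>card ?new \<le> card {j + 1, j + 2}\<close> by simp
qed

lemma row_weight: "b1 < b2 \<Longrightarrow> (2 * T + 2) * b1 + 2 * T + 2 \<le> (2 * T + 2) * b2"
  using T_pos mult_left_mono[of "b1 + 1" b2 "2 * T + 2"] by (simp add: algebra_simps)

lemma monotone_along_rank: "xs.monotone_along rank" "ys.monotone_along rank"
proof -
  show "xs.monotone_along rank"
    unfolding xs.monotone_along_def
  proof (intro allI impI)
    fix s t assume st: "xc s = xc t" "posx s \<le> posx t"
    show "rank s \<le> rank t"
    proof (cases "yc s < yc t")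
      case True
      then show ?thesis
        using row_weight[OF True] st coordinate_eqs[of s] coordinate_eqs[of t] T_pos
        unfolding rank_def by (simp split: if_splits)
    next
      case False
      with st(2) have "yc s = yc t"
        using coordinate_eqs[of s] coordinate_eqs[of t] by (simp split: if_splits; presburger)
      then show ?thesis
        using st coordinate_eqs[of s] coordinate_eqs[of t] unfolding rank_def by (simp split: if_splits)
    qed
  qed
  show "ys.monotone_along rank"
    unfolding ys.monotone_along_def rank_def by simp
qed

lemma rank_eq_zc: "rank t = 2 * T * yc t + 2 * zc t - (if is_up t then 0 else 1)"
  unfolding rank_def coordinate_eqs by (simp add: algebra_simps)

text \<open>Along a z-strip rank increases, except for a drop by one from each up tile to the next
  tile, a down tile of odd rank; so an even bound on the latter also bounds the former.\<close>

lemma zs_strip_convex_rank_le: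
  assumes "even j"
  shows "zs.strip_convex {t. rank t \<le> j}"
  unfolding zs.strip_convex_def
proof (intro ballI allI impI)
  fix s t r assume "t \<in> {t. rank t \<le> j}" "zc t = zc r" "posx r \<le> posx t"
  then have t: "rank t \<le> j" and r: "zc r = zc t" "posx r \<le> posx t" by simp_all
  show "r \<in> {t. rank t \<le> j}"
  proof (cases "yc r < yc t")
    case True
    then have "2 * T * yc r + 2 * T \<le> 2 * T * yc t"
      using T_pos mult_left_mono[of "yc r + 1" "yc t" "2 * T"] by (simp add: algebra_simps)
    then show ?thesis
      using t r T_pos unfolding rank_eq_zc by (simp split: if_splits)
  next
    case False
    then have "yc r = yc t" "is_up t \<Longrightarrow> is_up r"
      using r coordinate_eqs[of r] coordinate_eqs[of t] by (simp_all split: if_splits)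
    moreover have "rank t + 1 \<le> j" if "\<not> is_up t"
    proof -
      have "rank t = 2 * (T * yc t + zc t) - 1"
        using that unfolding rank_eq_zc by simp
      with t assms show ?thesis by presburger
    qed
    ultimately show ?thesis
      using t r unfolding rank_eq_zc by (simp split: if_splits)
  qed
qed


lemma strip_convex_initial:
  assumes "even j"
  shows "xs.strip_convex (initial j)" "ys.strip_convex (initial j)" "zs.strip_convex (initial j)"
proof -
  have interval: "initial j = H \<inter> {t. rank t \<in> {0..j}}"
    using rank_bounds by (auto simp: initial_def)
  have sublevel: "initial j = H \<inter> {t. rank t \<le> j}"
    by (auto simp: initial_def)
  show "xs.strip_convex (initial j)" "ys.strip_convex (initial j)"
    unfolding interval H_def
    by (intro xs.strip_convex_Int ys.strip_convex_Int strip_convex_hexagon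
        xs.strip_convex_interval ys.strip_convex_interval; simp add: monotone_along_rank)+
  show "zs.strip_convex (initial j)"
    unfolding sublevel H_def
    by (intro zs.strip_convex_Int strip_convex_hexagon zs_strip_convex_rank_le assms)
qed

lemma perimeter_initial_le:
  assumes "even j"
  shows "int (perimeter (initial j)) \<le> 3 * T - al - be - ga"
proof -
  have "perimeter (initial j) \<le> card (xc ` initial j) + card (yc ` initial j) + card (zc ` initial j)"
    by (rule perimeter_le_card_strips[OF finite_initial strip_convex_initial[OF assms]])
  moreover have "card (xc ` initial j) \<le> card {0..T - al - 1}"
    by (rule card_mono) (auto simp: initial_def H_def hexagon_def)
  moreover have "card (yc ` initial j) \<le> card {0..T - be - 1}"
    by (rule card_mono) (auto simp: initial_def H_def hexagon_def)
  moreover have "card (zc ` initial j) \<le> card {ga..T - 1}"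
    by (rule card_mono) (auto simp: initial_def H_def hexagon_def)
  ultimately show ?thesis
    using corners_sum corners_nonneg by simp
qed


definition root :: tile where
  "root = (if ga = 0 then (0, 0, True) else (ga - 1, 0, False))"

lemma mem_initial:
  "(a, b, u) \<in> initial j \<longleftrightarrow> (a, b, u) \<in> H \<and> (2 * T + 2) * b + 2 * a + (if u then 0 else 1) \<le> j"
  by (simp add: initial_def rank_def add.assoc)

lemma descent_from_up_tile:
  assumes t: "(a, b, True) \<in> initial j" "(a, b, True) \<noteq> root"
  shows "\<exists>s\<in>initial j. rank s < rank (a, b, True) \<and> tiles_adjacent (a, b, True) s"
proof -
  have h: "0 \<le> a" "0 \<le> b" "b \<le> T - be - 1" "ga \<le> a + b" "a + b \<le> T - 1"
    "a \<le> T - al - 1" "(2 * T + 2) * b + 2 * a \<le> j"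
    using t(1) by (simp_all add: mem_initial mem_H)
  consider "1 \<le> a" | "a = 0" "1 \<le> b" | "a = 0" "b = 0"
    using h by linarith
  then show ?thesis
  proof cases
    case 1
    have "(a - 1, b, False) = nbr 1 (a, b, True)" by (simp add: nbr.simps)
    moreover have "(a - 1, b, False) \<in> initial j"
      using h 1 by (simp add: mem_initial mem_H)
    moreover have "rank (a - 1, b, False) < rank (a, b, True)"
      by (simp add: rank_def)
    ultimately show ?thesis
      using tiles_adjacent_nbr[of 1 "(a, b, True)"] by auto
  next
    case 2
    have "(0, b - 1, False) = nbr 0 (a, b, True)" using 2 by (simp add: nbr.simps)
    moreover have "(0, b - 1, False) \<in> initial j"
      using h 2 T_pos by (simp add: mem_initial mem_H algebra_simps)
    moreover have "rank (0, b - 1, False) < rank (a, b, True)"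
      using 2 T_pos by (simp add: rank_def algebra_simps)
    ultimately show ?thesis
      using tiles_adjacent_nbr[of 0 "(a, b, True)"] by auto
  next
    case 3
    then have "(a, b, True) = root"
      using h corners_nonneg unfolding root_def by simp
    with t(2) show ?thesis by simp
  qed
qed


text \<open>A down tile on the lowest z-strip of H reaches a tile of smaller rank through the up tile
  to its right, whose rank is larger by one but still at most j as j is even.\<close>

lemma descent_via_up_tile:
  assumes "even j" and t: "(a, b, False) \<in> initial j" and "a + b + 1 = ga" "1 \<le> b"
  shows "\<exists>s\<in>initial j. rank s < rank (a, b, False) \<and> ((a, b, False), s) \<in> (adj_rel (initial j))\<^sup>*"
proof -
  have h: "0 \<le> a" "b \<le> T - be - 1" "(2 * T + 2) * b + 2 * a + 1 \<le> j"
    using t by (simp_all add: mem_initial mem_H)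
  define u where "u = nbr 1 (a, b, False)"
  define s where "s = nbr 0 u"
  have us: "u = (a + 1, b, True)" "s = (a + 1, b - 1, False)"
    by (simp_all add: u_def s_def nbr.simps)
  have "(2 * T + 2) * b = 2 * ((T + 1) * b)"
    by (simp add: algebra_simps)
  with h(3) \<open>even j\<close> have "(2 * T + 2) * b + 2 * a + 2 \<le> j"
    by presburger
  then have "u \<in> initial j"
    using h assms(3,4) corners_sum corners_nonneg ga_less by (simp add: us mem_initial mem_H)
  moreover have "s \<in> initial j"
    using h assms(3,4) corners_sum corners_nonneg ga_less T_pos
    by (simp add: us mem_initial mem_H algebra_simps)
  moreover have "rank s < rank (a, b, False)"
    using T_pos by (simp add: us rank_def algebra_simps)
  moreover have "tiles_adjacent (a, b, False) u" "tiles_adjacent u s"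
    unfolding u_def s_def by (simp_all add: tiles_adjacent_nbr)
  ultimately have "((a, b, False), u) \<in> adj_rel (initial j)" "(u, s) \<in> adj_rel (initial j)"
    "s \<in> initial j" "rank s < rank (a, b, False)"
    using t by (auto simp: adj_rel_def)
  then show ?thesis
    by (blast intro: rtrancl_into_rtrancl[OF r_into_rtrancl])
qed

lemma descent_from_down_tile:
  assumes "even j" and t: "(a, b, False) \<in> initial j" "(a, b, False) \<noteq> root"
  shows "\<exists>s\<in>initial j. rank s < rank (a, b, False) \<and> ((a, b, False), s) \<in> (adj_rel (initial j))\<^sup>*"
proof -
  have h: "0 \<le> a" "0 \<le> b" "ga \<le> a + b + 1" "a + b + 1 \<le> T - 1"
    using t(1) by (simp_all add: mem_initial mem_H)
  consider "ga \<le> a + b" | "a + b + 1 = ga" "1 \<le> b" | "a + b + 1 = ga" "b = 0"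
    using h by linarith
  then show ?thesis
  proof cases
    case 1
    have "(a, b, True) = nbr 2 (a, b, False)" by (simp add: nbr.simps)
    moreover have "(a, b, True) \<in> initial j"
      using t(1) 1 by (simp add: mem_initial mem_H)
    moreover have "rank (a, b, True) < rank (a, b, False)"
      by (simp add: rank_def)
    ultimately show ?thesis
      using t(1) tiles_adjacent_nbr[of 2 "(a, b, False)"] by (auto simp: adj_rel_def)
  next
    case 2
    with assms(1) t(1) show ?thesis by (rule descent_via_up_tile)
  next
    case 3
    then have "(a, b, False) = root"
      using h unfolding root_def by simp
    with t(2) show ?thesis by simp
  qed
qed

lemma polyiamond_initial:
  assumes "even j" "initial j \<noteq> {}"
  shows "polyiamond (initial j)"
proof -
  have "\<exists>s\<in>initial j. nat (rank s) < nat (rank t) \<and> (t, s) \<in> (adj_rel (initial j))\<^sup>*"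
    if t: "t \<in> initial j" "t \<noteq> root" for t
  proof -
    have "\<exists>s\<in>initial j. rank s < rank t \<and> (t, s) \<in> (adj_rel (initial j))\<^sup>*"
    proof (cases t rule: tile_cases)
      case (up a b)
      then obtain s where "s \<in> initial j" "rank s < rank t" "tiles_adjacent t s"
        using descent_from_up_tile t by blast
      moreover from this have "(t, s) \<in> adj_rel (initial j)"
        using t(1) by (simp add: adj_rel_def)
      ultimately show ?thesis by blast
    next
      case (down a b)
      then show ?thesis
        using descent_from_down_tile[OF assms(1)] t by simp
    qed
    then obtain s where s: "s \<in> initial j" "rank s < rank t" "(t, s) \<in> (adj_rel (initial j))\<^sup>*"
      by blast
    moreover have "0 \<le> rank s"
      using rank_bounds s(1) by (simp add: initial_def)
    ultimately show ?thesis
      by (intro bexI[of _ s]) auto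
  qed
  then show ?thesis
    by (intro polyiamond_if_connected_to[OF finite_initial assms(2)] rtrancl_to_root_by_descent)
qed

lemma exists_initial_polyiamond:
  assumes "2 \<le> n" "n \<le> card H"
  shows "\<exists>A. polyiamond A \<and> (card A = n \<or> card A + 1 = n) \<and> int (perimeter A) \<le> 3 * T - al - be - ga"
proof -
  define g where "g k = card (initial (2 * int k - 2))" for k
  have "g 0 = 0"
    by (simp add: g_def initial_below_zero)
  moreover have "n \<le> g (nat ((2 * T + 2) * T) + 1)"
    using assms(2) T_pos by (simp add: g_def initial_top)
  moreover have "g (Suc k) \<le> g k + 2" for k
    using card_initial_add_2[of "2 * int k - 2"] by (simp add: g_def algebra_simps)
  ultimately obtain k where k: "g k = n \<or> g k + 1 = n"
    using discrete_intermediate_value by (metis le0)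
  then have "initial (2 * int k - 2) \<noteq> {}"
    using assms(1) by (auto simp: g_def)
  then show ?thesis
    using k polyiamond_initial perimeter_initial_le
    by (intro exI[of _ "initial (2 * int k - 2)"]) (auto simp: g_def)
qed


end

lemma even_square_minus: "even ((x::int)\<^sup>2 - x)"
  by (simp add: power2_eq_square algebra_simps)

lemma hexagon_for_perimeter:
  assumes "3 \<le> S"
  obtains T al be ga where "hexagon_filling T al be ga" "3 * T - al - be - ga = int S"
    "(int S)\<^sup>2 \<le> 6 * int (card (hexagon_filling.H T al be ga)) + 7"
    "even (int (card (hexagon_filling.H T al be ga)) + int S)"
proof -
  \<comment> \<open>Nearly equal corners keep the defect in isoperimetric_defect at most 3 + 2 * 2.\<close>
  define T :: int where "T = int S div 2"
  define sg where "sg = 3 * T - int S"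
  define ga be al where "ga = sg div 3" "be = (sg + 1) div 3" "al = (sg + 2) div 3"
  have sg: "sg = T \<or> sg = T - 1" "1 \<le> T"
    using assms unfolding sg_def T_def by presburger+
  have sum: "al + be + ga = sg"
    unfolding ga_be_al_def by presburger
  have spread: "(al - be)\<^sup>2 + (be - ga)\<^sup>2 + (ga - al)\<^sup>2 \<le> 2"
  proof -
    have "(al = ga \<and> be = ga) \<or> (al = ga + 1 \<and> be = ga) \<or> (al = ga + 1 \<and> be = ga + 1)"
      unfolding ga_be_al_def by presburger
    then show ?thesis by auto
  qed
  interpret hexagon_filling T al be ga
    by unfold_locales (use sg sum in \<open>auto simp: ga_be_al_def\<close>)
  show ?thesis
  proof
    show "hexagon_filling T al be ga" ..
    show perimeter: "3 * T - al - be - ga = int S"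
      using sum by (simp add: sg_def)
    have "T - al - be - ga = 0 \<or> T - al - be - ga = 1"
      using sg sum by auto
    then have "(T - al - be - ga)\<^sup>2 \<le> 1"
      by auto
    then show "(int S)\<^sup>2 \<le> 6 * int (card H) + 7"
      using isoperimetric_defect[of T al be ga] perimeter card_H spread sum by simp
    obtain p q r w where "T\<^sup>2 - T = 2 * p" "al\<^sup>2 - al = 2 * q" "be\<^sup>2 - be = 2 * r" "ga\<^sup>2 - ga = 2 * w"
      using even_square_minus by (meson evenE)
    then have "int (card H) + int S = 2 * (p - q - r - w + 2 * T - (al + be + ga))"
      using card_H perimeter by (simp add: algebra_simps)
    then show "even (int (card H) + int S)"
      by simp
  qed
qed

lemma perimeter_singleton: "perimeter {t} = 3"
proof -
  have "boundary {} = {}" "shared_sides {} t = {}"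
    by (simp_all add: boundary_def shared_sides_def)
  then show ?thesis
    using card_boundary_insert[of "{}" t] by (simp add: perimeter_eq_card_boundary)
qed

lemma three_le_if_six_le_square: "1 \<le> n \<Longrightarrow> 6 * n \<le> S\<^sup>2 \<Longrightarrow> 3 \<le> (S::nat)"
proof (rule ccontr)
  assume "1 \<le> n" "6 * n \<le> S\<^sup>2" "\<not> 3 \<le> S"
  moreover from this have "S\<^sup>2 \<le> 2\<^sup>2" by (intro power_mono) auto
  ultimately show False by simp
qed

lemma exists_polyiamond_card_near:
  assumes "2 \<le> n" "even (n + S)" "6 * n \<le> S\<^sup>2"
  shows "\<exists>A. polyiamond A \<and> (card A = n \<or> card A + 1 = n) \<and> perimeter A \<le> S"
proof -
  have "3 \<le> S"
    using assms(1,3) by (intro three_le_if_six_le_square[of n]) simp_all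
  then obtain T al be ga where "hexagon_filling T al be ga" and S: "3 * T - al - be - ga = int S"
    and H: "(int S)\<^sup>2 \<le> 6 * int (card (hexagon_filling.H T al be ga)) + 7"
      "even (int (card (hexagon_filling.H T al be ga)) + int S)"
    by (rule hexagon_for_perimeter)
  interpret hexagon_filling T al be ga by fact
  have "6 * int n \<le> (int S)\<^sup>2"
    using assms(3) by (simp flip: of_nat_power)
  with H(1) have "int n \<le> int (card H) + 1" by linarith
  moreover have "even (int n + int S)"
    using assms(2) by simp
  ultimately have "n \<le> card H"
    using H(2) by presburger
  then show ?thesis
    using exists_initial_polyiamond[OF assms(1)] S by fastforce
qed

theorem exists_polyiamond_perimeter_le:
  assumes "1 \<le> n" "even (n + S)" "6 * n \<le> S\<^sup>2"
  shows "\<exists>A. polyiamond A \<and> card A = n \<and> perimeter A \<le> S"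
proof (cases "n = 1")
  case True
  moreover have "3 \<le> S"
    using assms(1,3) by (rule three_le_if_six_le_square)
  ultimately show ?thesis
    using perimeter_singleton by (intro exI[of _ "{(0, 0, True)}"]) (simp add: polyiamond_iff)
next
  case False
  with assms obtain A where A: "polyiamond A" "card A = n \<or> card A + 1 = n" "perimeter A \<le> S"
    using exists_polyiamond_card_near[of n S] by auto
  show ?thesis
  proof (cases "card A = n")
    case False
    with A(2) have "card A + 1 = n" by simp
    moreover have "even (perimeter A + card A)"
      using A(1) even_perimeter_plus_card by (simp add: polyiamond_iff)
    ultimately have "perimeter A + 1 \<le> S"
      using A(3) assms(2) by presburger
    moreover obtain u where "u \<notin> A" "polyiamond (insert u A)"
      "perimeter (insert u A) \<le> perimeter A + 1"
      using exists_polyiamond_insert[OF A(1)] by blast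
    ultimately show ?thesis
      using A(1) \<open>card A + 1 = n\<close> by (intro exI[of _ "insert u A"]) (auto simp: polyiamond_iff)
  qed (use A in blast)
qed


section \<open>Minimal perimeter\<close>

lemma p_min_attained:
  assumes "1 \<le> n"
  shows "\<exists>A. polyiamond A \<and> card A = n \<and> perimeter A = p_min n"
proof -
  have "6 * n \<le> (3 * n)\<^sup>2"
    using assms by (simp add: power2_eq_square)
  then have "\<exists>A. polyiamond A \<and> card A = n \<and> perimeter A \<le> 3 * n"
    using exists_polyiamond_perimeter_le[OF assms] by simp
  then have "\<exists>p A. polyiamond A \<and> card A = n \<and> perimeter A = p"
    by blast
  then show ?thesis
    unfolding p_min_def by (rule LeastI_ex)
qed

lemma p_min_le: "polyiamond A \<Longrightarrow> p_min (card A) \<le> perimeter A"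
  unfolding p_min_def by (rule Least_le) blast

lemma p_min_admissible: "1 \<le> n \<Longrightarrow> even (n + p_min n) \<and> 6 * n \<le> (p_min n)\<^sup>2"
  using p_min_attained isoperimetric_inequality even_perimeter_plus_card
  by (metis add.commute polyiamond_iff)

lemma p_min_least: "1 \<le> n \<Longrightarrow> even (n + S) \<Longrightarrow> 6 * n \<le> S\<^sup>2 \<Longrightarrow> p_min n \<le> S"
  using exists_polyiamond_perimeter_le p_min_le by (metis le_trans)

lemma three_le_p_min: "1 \<le> n \<Longrightarrow> 3 \<le> p_min n"
  using p_min_admissible three_le_if_six_le_square by blast

lemma p_min_add_le:
  assumes "1 \<le> n"
  shows "p_min (n + k) \<le> p_min n + k"
proof (rule p_min_least)
  show "1 \<le> n + k"
    using assms by simp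
  show "even (n + k + (p_min n + k))"
    using p_min_admissible[OF assms] by presburger
  have "3 * k \<le> p_min n * k"
    using three_le_p_min[OF assms] by (rule mult_right_mono) simp
  then have "6 * n + 2 * (3 * k) \<le> (p_min n)\<^sup>2 + 2 * (p_min n * k)"
    using p_min_admissible[OF assms] by (intro add_mono) simp_all
  also have "\<dots> \<le> (p_min n + k)\<^sup>2"
    by (simp add: power2_eq_square algebra_simps)
  finally show "6 * (n + k) \<le> (p_min n + k)\<^sup>2"
    by simp
qed

lemma p_min_le_p_min_add:
  assumes "1 \<le> n"
  shows "p_min n \<le> p_min (n + k) + 1"
proof -
  define r where "r = p_min (n + k)"
  have "6 * n \<le> r\<^sup>2"
    using p_min_admissible[of "n + k"] assms by (simp add: r_def)
  moreover have "r\<^sup>2 \<le> (r + 1)\<^sup>2"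
    by (simp add: power_mono)
  ultimately have "p_min n \<le> r \<or> p_min n \<le> r + 1"
    using p_min_least[OF assms, of r] p_min_least[OF assms, of "r + 1"] by fastforce
  then show ?thesis
    by (auto simp: r_def)
qed

lemma p_min_Suc_neq: "1 \<le> n \<Longrightarrow> p_min (n + 1) \<noteq> p_min n"
  using p_min_admissible[of n] p_min_admissible[of "n + 1"] by presburger

lemma p_min_le_after_increase:
  assumes "1 \<le> n" "1 \<le> k" "p_min (n + 1) = p_min n + 1"
  shows "p_min n \<le> p_min (n + k)"
proof (rule ccontr)
  assume "\<not> p_min n \<le> p_min (n + k)"
  with p_min_le_p_min_add[OF assms(1), of k] have r: "p_min (n + k) + 1 = p_min n"
    by simp
  have "6 * (n + 1) \<le> (p_min (n + k))\<^sup>2"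
    using p_min_admissible[of "n + k"] assms(1,2) by simp
  moreover have "even (n + 1 + p_min (n + k))"
    using p_min_admissible[OF assms(1)] r by presburger
  ultimately have "p_min (n + 1) \<le> p_min (n + k)"
    by (intro p_min_least) simp_all
  with r assms(3) show False by simp
qed

theorem lemma1:
  fixes n :: nat
  assumes "n \<ge> 1"
  shows "(int (p_min (n + 1)) = int (p_min n) + 1 \<or> int (p_min (n + 1)) = int (p_min n) - 1)
    \<and> (\<forall>k::nat. k \<ge> 1 \<longrightarrow>
         int (p_min n) - 1 \<le> int (p_min (n + k)) \<and> int (p_min (n + k)) \<le> int (p_min n) + int k)
    \<and> (int (p_min (n + 1)) = int (p_min n) + 1 \<longrightarrow>
         (\<forall>k::nat. k \<ge> 1 \<longrightarrow> p_min n \<le> p_min (n + k)))"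
proof (intro conjI allI impI)
  show "int (p_min (n + 1)) = int (p_min n) + 1 \<or> int (p_min (n + 1)) = int (p_min n) - 1"
    using p_min_add_le[OF assms, of 1] p_min_le_p_min_add[OF assms, of 1] p_min_Suc_neq[OF assms]
    by linarith
  fix k :: nat
  show "int (p_min n) - 1 \<le> int (p_min (n + k))" "int (p_min (n + k)) \<le> int (p_min n) + int k"
    using p_min_le_p_min_add[OF assms, of k] p_min_add_le[OF assms, of k] by linarith+
next
  fix k :: nat
  assume "int (p_min (n + 1)) = int (p_min n) + 1" "1 \<le> k"
  then show "p_min n \<le> p_min (n + k)"
    using p_min_le_after_increase[OF assms] by simp
qed

end
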